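(* Let $\psi\colon\mathbb R^2\to\mathbb R$ be smooth and $p_\ast\in\mathbb R^2$ be such that conditions 1–7 below hold with $N=2$. Let $\alpha,c>0$, $\varpi\in\mathbb N$, $U(\tau):=\alpha\sin(\varpi\tau)$, $v(\tau):=c\sin(\varpi\tau)$, and for $a\in\mathbb R$ define $\phi^a\colon\mathbb R^2\times\mathbb S^1\to\mathbb R$ by $\phi^a([p,o]):=\frac1{2\pi}\int_0^{2\pi}\int_0^1(1-s)\,U(\tau)^2v(\tau)\,\langle\nabla^2\psi(p+asU(\tau)o)o,o\rangle\,\mathrm ds\,\mathrm d\tau$. Then there exist $a_0',\kappa>0$ such that $|\phi^a(x)|\le\kappa|\nabla\psi(p)|$ for every $a\in[0,a_0']$ and every $x=[p,o]\in\mathbb R^2\times\mathbb S^1$.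
   Context: $\mathbb S^1$ is the unit circle in $\mathbb R^2$. Notation: $y_\ast:=\psi(p_\ast)$, $\underline y:=\inf\psi\in\mathbb R\cup\{-\infty\}$, $|\nabla^2\psi(p)|$ the operator norm of the Hessian, $\psi^{-1}(\ge y):=\{p:\psi(p)\ge y\}$. Conditions: (1) $\psi(p)<y_\ast$ for $p\ne p_\ast$; (2) $\nabla^2\psi(p_\ast)$ negative definite; (3) there is $r_1>0$ with $\psi(p_\ast+v)=\psi(p_\ast-v)$ for $|v|\le r_1$; (4) there is $c_1>0$ with $|\nabla^2\psi(p)|\le c_1$ for all $p$; (5) $\nabla\psi(p)\ne0$ for $p\ne p_\ast$; (6) for every $y\in(\underline y,y_\ast)$, $\psi^{-1}(\ge y)$ is compact; (7) there are $c_2,r_2,r_3>0$ with $|\nabla^2\psi(p+v)|\le c_2|\nabla\psi(p)|$ for all $|p-p_\ast|\ge r_2$, $|v|\le r_3$. *)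

theory Defs
  imports "HOL-Analysis.Analysis"
begin

text \<open>Smoothness (C-infinity) on the plane: there is a family of iterated partial
derivatives, indexed by lists of coordinate directions, each of which is
(Frechet) differentiable everywhere with the next ones as partial derivatives.\<close>
definition smooth2 :: "(real^2 \<Rightarrow> real) \<Rightarrow> bool" where
  "smooth2 f \<longleftrightarrow> (\<exists>d :: 2 list \<Rightarrow> real^2 \<Rightarrow> real.
      d [] = f \<and>
      (\<forall>l p. (d l has_derivative (\<lambda>v. \<Sum>i\<in>UNIV. v$i * d (i # l) p)) (at p)))"

definition grad :: "(real^2 \<Rightarrow> real) \<Rightarrow> real^2 \<Rightarrow> real^2" where
  "grad f p = (THE g. (f has_derivative (\<lambda>v. g \<bullet> v)) (at p))"

definition hess :: "(real^2 \<Rightarrow> real) \<Rightarrow> real^2 \<Rightarrow> real^2^2" where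
  "hess f p = (THE H. (grad f has_derivative (\<lambda>v. H *v v)) (at p))"

definition hess_norm :: "(real^2 \<Rightarrow> real) \<Rightarrow> real^2 \<Rightarrow> real" where
  "hess_norm f p = onorm (\<lambda>v. hess f p *v v)"

definition phi :: "(real^2 \<Rightarrow> real) \<Rightarrow> real \<Rightarrow> real \<Rightarrow> nat \<Rightarrow> real \<Rightarrow> real^2 \<Rightarrow> real^2 \<Rightarrow> real" where
  "phi \<psi> \<alpha> c w a p u =
     (1 / (2 * pi)) * integral {0..2*pi} (\<lambda>\<tau>. integral {0..1} (\<lambda>s.
        (1 - s) * (\<alpha> * sin (real w * \<tau>))\<^sup>2 * (c * sin (real w * \<tau>)) *
        ((hess \<psi> (p + (a * s * (\<alpha> * sin (real w * \<tau>))) *\<^sub>R u) *v u) \<bullet> u)))"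

end

theory Submission
  imports Defs
begin

(*
  Write Q(q) = <hess psi(q) o, o>. The inner integrand of phi^a([p,o]) is U^2 v = alpha^2 c sin^3(w tau)
  times Q(p + a s U o), and tau -> 2 pi - tau flips the sign of sin(w tau); so phi^a([p,o]) is at most
  alpha^2 c times a bound on the odd part Q(p + y) - Q(p - y) over |y| <= a alpha.
  That odd part is O(|grad psi(p)|): near p* the Hessian is even about p* (condition 3), so the odd
  part is O(|p - p*|) by Lipschitz continuity of the Hessian, while |grad psi(p)| >= l |p - p*| since
  p* is a nondegenerate critical point (condition 2); far from p* condition 7 applies; on the
  compact annulus in between the gradient is bounded below (condition 5) and the Hessian above
  (condition 4).
*)

lemma has_derivative_vecI:
  fixes G :: "'a::real_normed_vector \<Rightarrow> real^'n"
  assumes "\<And>i. ((\<lambda>x. G x $ i) has_derivative (\<lambda>v. G' v $ i)) (at p)"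
  shows "(G has_derivative G') (at p)"
proof (rule iffD2[OF has_derivative_componentwise_within], intro ballI)
  fix b :: "real^'n" assume "b \<in> Basis"
  then obtain i where "b = axis i 1" unfolding Basis_vec_def by auto
  then show "((\<lambda>x. G x \<bullet> b) has_derivative (\<lambda>x. G' x \<bullet> b)) (at p)"
    using assms by (simp add: cart_eq_inner_axis[symmetric])
qed

lemma has_derivative_reflect_symmetric:
  fixes F :: "'a::real_normed_vector \<Rightarrow> 'b::real_normed_vector"
  assumes F': "\<And>q. (F has_derivative F' q) (at q)"
    and sym: "\<And>q. q \<in> ball z r \<Longrightarrow> F q = s *\<^sub>R F (2 *\<^sub>R z - q)"
    and q: "q \<in> ball z r"
  shows "F' q v = - s *\<^sub>R F' (2 *\<^sub>R z - q) v"
proof -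
  have "((\<lambda>x. 2 *\<^sub>R z - x) has_derivative (\<lambda>v. - v)) (at q)"
    by (auto intro!: derivative_eq_intros)
  from has_derivative_compose[OF this F']
  have "((\<lambda>x. s *\<^sub>R F (2 *\<^sub>R z - x)) has_derivative (\<lambda>v. s *\<^sub>R F' (2 *\<^sub>R z - q) (- v))) (at q)"
    by (rule has_derivative_scaleR_right)
  then have "(F has_derivative (\<lambda>v. s *\<^sub>R F' (2 *\<^sub>R z - q) (- v))) (at q)"
    by (rule has_derivative_transform_within_open[OF _ open_ball q]) (simp add: sym)
  then have "F' q = (\<lambda>v. s *\<^sub>R F' (2 *\<^sub>R z - q) (- v))"
    using F' by (rule has_derivative_unique[rotated])
  moreover have "F' (2 *\<^sub>R z - q) (- v) = - F' (2 *\<^sub>R z - q) v"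
    by (rule linear_neg[OF has_derivative_linear[OF F']])
  ultimately show ?thesis by simp
qed

lemma has_derivative_lower_bound_near_zero:
  fixes G :: "'a::real_normed_vector \<Rightarrow> 'b::real_normed_vector"
  assumes "(G has_derivative G') (at z)" "G z = 0"
    and "m > 0" "\<And>v. m * norm v \<le> norm (G' v)"
  obtains \<delta> where "\<delta> > 0" "\<And>p. norm (p - z) < \<delta> \<Longrightarrow> m / 2 * norm (p - z) \<le> norm (G p)"
proof -
  obtain \<delta> where "\<delta> > 0"
    and \<delta>: "\<And>p. norm (p - z) < \<delta> \<Longrightarrow> norm (G p - G z - G' (p - z)) \<le> m / 2 * norm (p - z)"
    using assms(1) \<open>m > 0\<close> unfolding has_derivative_at_alt by (meson half_gt_zero)
  have "m / 2 * norm (p - z) \<le> norm (G p)" if "norm (p - z) < \<delta>" for p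
  proof -
    have "norm (G p - G' (p - z)) \<le> m / 2 * norm (p - z)"
      using \<delta>[OF that] assms(2) by simp
    moreover have "norm (G' (p - z)) - norm (G p) \<le> norm (G p - G' (p - z))"
      by (metis norm_minus_commute norm_triangle_ineq2)
    ultimately show ?thesis
      using assms(4)[of "p - z"] by linarith
  qed
  with \<open>\<delta> > 0\<close> show ?thesis
    using that by blast
qed

lemma continuous_on_compact_norm_lower_bound:
  fixes G :: "'a::topological_space \<Rightarrow> 'b::real_normed_vector"
  assumes "compact S" "continuous_on S G" "\<And>p. p \<in> S \<Longrightarrow> G p \<noteq> 0"
  obtains m where "m > 0" "\<And>p. p \<in> S \<Longrightarrow> m \<le> norm (G p)"
proof (cases "S = {}")
  case False
  have "continuous_on S (\<lambda>p. norm (G p))"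
    using assms(2) by (intro continuous_intros)
  then obtain x where "x \<in> S" "\<And>p. p \<in> S \<Longrightarrow> norm (G x) \<le> norm (G p)"
    using continuous_attains_inf[OF assms(1) False] by blast
  then show ?thesis
    using that[of "norm (G x)"] assms(3) by simp
next
  case True
  then show ?thesis
    using that[of 1] by simp
qed

lemma partials_bounded_imp_lipschitz:
  fixes f :: "real^'n \<Rightarrow> real"
  assumes f': "\<And>q. (f has_derivative (\<lambda>v. \<Sum>i\<in>UNIV. v$i * D i q)) (at q)"
    and "convex S" and M: "\<And>q. q \<in> S \<Longrightarrow> (\<Sum>i\<in>UNIV. \<bar>D i q\<bar>) \<le> M"
    and "x \<in> S" "y \<in> S"
  shows "\<bar>f x - f y\<bar> \<le> M * norm (x - y)"
proof -
  have "onorm (\<lambda>v. \<Sum>i\<in>UNIV. v$i * D i q) \<le> M" if "q \<in> S" for q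
  proof (rule onorm_le)
    fix v :: "real^'n"
    have "\<bar>\<Sum>i\<in>UNIV. v$i * D i q\<bar> \<le> (\<Sum>i\<in>UNIV. norm v * \<bar>D i q\<bar>)"
      by (rule order_trans[OF sum_abs sum_mono])
        (simp add: abs_mult mult_right_mono component_le_norm_cart)
    also have "\<dots> \<le> norm v * M"
      using M[OF that] by (simp add: sum_distrib_left[symmetric] mult_left_mono)
    finally show "norm (\<Sum>i\<in>UNIV. v$i * D i q) \<le> M * norm v"
      by (simp add: mult.commute)
  qed
  then show ?thesis
    using differentiable_bound[OF \<open>convex S\<close> has_derivative_at_withinI[OF f']] assms(4,5)
    by simp
qed

lemma continuous_on_quadratic_form:
  fixes H :: "'a::topological_space \<Rightarrow> real^'n^'n"
  assumes "continuous_on S H"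
  shows "continuous_on S (\<lambda>q. (H q *v u) \<bullet> u)"
  unfolding matrix_vector_mult_def inner_vec_def vec_lambda_beta
  by (intro continuous_intros assms)

lemma abs_quadratic_form_le_onorm:
  fixes A :: "real^'n^'n"
  assumes "norm u = 1"
  shows "\<bar>(A *v u) \<bullet> u\<bar> \<le> onorm (\<lambda>v. A *v v)"
proof -
  have "\<bar>(A *v u) \<bullet> u\<bar> \<le> norm (A *v u) * norm u"
    by (rule Cauchy_Schwarz_ineq2)
  also have "\<dots> \<le> onorm (\<lambda>v. A *v v) * norm u"
    using onorm[OF matrix_vector_mul_bounded_linear, of A u] assms by simp
  finally show ?thesis
    using assms by simp
qed

section \<open>Smooth functions on the plane\<close>

lemma grad_eqI:
  assumes "(f has_derivative (\<lambda>v. g \<bullet> v)) (at p)"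
  shows "grad f p = g"
  unfolding grad_def
proof (rule the_equality)
  show "(f has_derivative (\<lambda>v. g \<bullet> v)) (at p)" by (fact assms)
  fix g' assume "(f has_derivative (\<lambda>v. g' \<bullet> v)) (at p)"
  then have "(\<lambda>v. g' \<bullet> v) = (\<lambda>v. g \<bullet> v)" using assms by (rule has_derivative_unique)
  then show "g' = g" by (simp add: fun_eq_iff vector_eq_rdot)
qed

lemma hess_eqI:
  assumes "(grad f has_derivative (\<lambda>v. H *v v)) (at p)"
  shows "hess f p = H"
  unfolding hess_def
proof (rule the_equality)
  show "(grad f has_derivative (\<lambda>v. H *v v)) (at p)" by (fact assms)
  fix H' assume "(grad f has_derivative (\<lambda>v. H' *v v)) (at p)"
  then have "(\<lambda>v. H' *v v) = (\<lambda>v. H *v v)" using assms by (rule has_derivative_unique)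
  then show "H' = H" by (simp add: matrix_eq fun_eq_iff)
qed

definition iterated_partials :: "(real^2 \<Rightarrow> real) \<Rightarrow> (2 list \<Rightarrow> real^2 \<Rightarrow> real) \<Rightarrow> bool" where
  "iterated_partials \<psi> d \<longleftrightarrow> d [] = \<psi> \<and>
     (\<forall>l p. (d l has_derivative (\<lambda>v. \<Sum>i\<in>UNIV. v$i * d (i # l) p)) (at p))"

lemma smooth2_iff_iterated_partials: "smooth2 \<psi> \<longleftrightarrow> (\<exists>d. iterated_partials \<psi> d)"
  unfolding smooth2_def iterated_partials_def by blast

lemma iterated_partials_has_derivative:
  "iterated_partials \<psi> d \<Longrightarrow> (d l has_derivative (\<lambda>v. \<Sum>i\<in>UNIV. v$i * d (i # l) p)) (at p)"
  unfolding iterated_partials_def by blast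

lemma iterated_partials_continuous:
  assumes "iterated_partials \<psi> d"
  shows "continuous_on S (d l)"
  by (intro continuous_at_imp_continuous_on ballI
      has_derivative_continuous[OF iterated_partials_has_derivative[OF assms]])

lemma has_derivative_iterated_partials:
  assumes "iterated_partials \<psi> d"
  shows "(\<psi> has_derivative (\<lambda>v. (\<chi> i. d [i] p) \<bullet> v)) (at p)"
  using iterated_partials_has_derivative[OF assms, of "[]" p] assms
  by (simp add: iterated_partials_def inner_vec_def mult.commute)

lemma grad_eq_iterated_partials:
  assumes "iterated_partials \<psi> d"
  shows "grad \<psi> p = (\<chi> i. d [i] p)"
  using has_derivative_iterated_partials[OF assms] by (rule grad_eqI)

lemma grad_has_derivative_iterated_partials:
  assumes "iterated_partials \<psi> d"
  shows "(grad \<psi> has_derivative (\<lambda>v. (\<chi> i j. d [j,i] p) *v v)) (at p)"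
  unfolding grad_eq_iterated_partials[OF assms, abs_def]
  by (rule has_derivative_vecI)
    (simp add: matrix_vector_mult_def mult.commute iterated_partials_has_derivative[OF assms])

lemma hess_eq_iterated_partials:
  assumes "iterated_partials \<psi> d"
  shows "hess \<psi> p = (\<chi> i j. d [j,i] p)"
  using grad_has_derivative_iterated_partials[OF assms] by (rule hess_eqI)

lemma smooth2_has_grad:
  assumes "smooth2 \<psi>"
  shows "(\<psi> has_derivative (\<lambda>v. grad \<psi> p \<bullet> v)) (at p)"
proof -
  obtain d where d: "iterated_partials \<psi> d"
    using assms smooth2_iff_iterated_partials by blast
  show ?thesis
    unfolding grad_eq_iterated_partials[OF d] by (rule has_derivative_iterated_partials[OF d])
qed

lemma smooth2_has_hess:
  assumes "smooth2 \<psi>"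
  shows "(grad \<psi> has_derivative (\<lambda>v. hess \<psi> p *v v)) (at p)"
proof -
  obtain d where d: "iterated_partials \<psi> d"
    using assms smooth2_iff_iterated_partials by blast
  show ?thesis
    unfolding hess_eq_iterated_partials[OF d] by (rule grad_has_derivative_iterated_partials[OF d])
qed

lemma smooth2_continuous_hess:
  assumes "smooth2 \<psi>"
  shows "continuous_on UNIV (hess \<psi>)"
proof -
  obtain d where d: "iterated_partials \<psi> d"
    using assms smooth2_iff_iterated_partials by blast
  show ?thesis
    unfolding hess_eq_iterated_partials[OF d, abs_def]
    by (intro continuous_intros iterated_partials_continuous[OF d])
qed

lemma smooth2_hess_lipschitz:
  assumes "smooth2 \<psi>" "compact S" "convex S"
  obtains L where "L \<ge> 0"
    "\<And>x y. x \<in> S \<Longrightarrow> y \<in> S \<Longrightarrow> onorm (\<lambda>v. (hess \<psi> x - hess \<psi> y) *v v) \<le> L * norm (x - y)"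
proof -
  obtain d where d: "iterated_partials \<psi> d"
    using assms(1) smooth2_iff_iterated_partials by blast
  have "continuous_on S (\<lambda>q. \<Sum>i\<in>UNIV. \<Sum>j\<in>UNIV. \<Sum>k\<in>UNIV. \<bar>d [k,j,i] q\<bar>)"
    by (intro continuous_intros iterated_partials_continuous[OF d])
  then obtain M where "M \<ge> 0"
    and M: "\<And>q. q \<in> S \<Longrightarrow> norm (\<Sum>i\<in>UNIV. \<Sum>j\<in>UNIV. \<Sum>k\<in>UNIV. \<bar>d [k,j,i] q\<bar>) \<le> M"
    using continuous_on_compact_bound[OF assms(2)] by blast
  have "(\<Sum>k\<in>UNIV. \<bar>d [k,j,i] q\<bar>) \<le> M" if "q \<in> S" for i j q
  proof -
    have "(\<Sum>k\<in>UNIV. \<bar>d [k,j,i] q\<bar>) \<le> (\<Sum>j\<in>UNIV. \<Sum>k\<in>UNIV. \<bar>d [k,j,i] q\<bar>)"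
      by (rule member_le_sum) (auto intro: sum_nonneg)
    also have "\<dots> \<le> (\<Sum>i\<in>UNIV. \<Sum>j\<in>UNIV. \<Sum>k\<in>UNIV. \<bar>d [k,j,i] q\<bar>)"
      by (rule member_le_sum) (auto intro!: sum_nonneg)
    also have "\<dots> \<le> M"
      using M[OF that] by simp
    finally show ?thesis .
  qed
  then have "\<bar>d [j,i] x - d [j,i] y\<bar> \<le> M * norm (x - y)" if "x \<in> S" "y \<in> S" for i j x y
    by (rule partials_bounded_imp_lipschitz[OF iterated_partials_has_derivative[OF d] assms(3) _ that])
  then have "onorm (\<lambda>v. (hess \<psi> x - hess \<psi> y) *v v) \<le> 2 * 2 * (M * norm (x - y))"
    if "x \<in> S" "y \<in> S" for x y
    using onorm_le_matrix_component[of "hess \<psi> x - hess \<psi> y"] that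
    by (simp add: hess_eq_iterated_partials[OF d])
  with \<open>M \<ge> 0\<close> show ?thesis
    using that[of "4 * M"] by (simp add: mult.assoc)
qed

lemma smooth2_grad_reflect:
  assumes "smooth2 \<psi>" and sym: "\<And>q. q \<in> ball z r \<Longrightarrow> \<psi> q = \<psi> (2 *\<^sub>R z - q)"
    and "q \<in> ball z r"
  shows "grad \<psi> q = - grad \<psi> (2 *\<^sub>R z - q)"
proof -
  have "grad \<psi> q \<bullet> v = - 1 *\<^sub>R (grad \<psi> (2 *\<^sub>R z - q) \<bullet> v)" for v
    by (rule has_derivative_reflect_symmetric[OF smooth2_has_grad[OF assms(1)] _ assms(3)])
      (simp add: sym)
  then have "\<forall>v. grad \<psi> q \<bullet> v = (- grad \<psi> (2 *\<^sub>R z - q)) \<bullet> v"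
    by simp
  then show ?thesis
    by (simp only: vector_eq_rdot)
qed

lemma smooth2_hess_reflect:
  assumes "smooth2 \<psi>" and sym: "\<And>q. q \<in> ball z r \<Longrightarrow> \<psi> q = \<psi> (2 *\<^sub>R z - q)"
    and "q \<in> ball z r"
  shows "hess \<psi> q = hess \<psi> (2 *\<^sub>R z - q)"
proof -
  have "grad \<psi> q' = (- 1) *\<^sub>R grad \<psi> (2 *\<^sub>R z - q')" if "q' \<in> ball z r" for q'
    using smooth2_grad_reflect[of \<psi> z r q', OF assms(1) sym that] by simp
  from has_derivative_reflect_symmetric[of "grad \<psi>" "\<lambda>q v. hess \<psi> q *v v" z r "- 1" q,
      OF smooth2_has_hess[OF assms(1)] this assms(3)]
  have "hess \<psi> q *v v = hess \<psi> (2 *\<^sub>R z - q) *v v" for v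
    by simp
  then show ?thesis
    by (simp add: matrix_eq)
qed

lemma grad_lower_bound_near_critical_point:
  assumes "smooth2 \<psi>" "grad \<psi> z = 0" and nondegenerate: "\<And>v. hess \<psi> z *v v = 0 \<Longrightarrow> v = 0"
  obtains l \<delta> where "l > 0" "\<delta> > 0"
    "\<And>p. norm (p - z) < \<delta> \<Longrightarrow> l * norm (p - z) \<le> norm (grad \<psi> p)"
proof -
  have "inj ((*v) (hess \<psi> z))"
    using nondegenerate by (simp add: linear_injective_0)
  then obtain m where "m > 0" "\<And>v. m * norm v \<le> norm (hess \<psi> z *v v)"
    using linear_inj_bounded_below_pos[OF matrix_vector_mul_linear] by blast
  from has_derivative_lower_bound_near_zero[OF smooth2_has_hess[OF assms(1)] assms(2) this]
  show ?thesis
    using that[of "m / 2"] \<open>m > 0\<close> by (metis half_gt_zero)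
qed

lemma smooth2_grad_bounded_below_on_annulus:
  assumes "smooth2 \<psi>" "\<And>p. p \<noteq> z \<Longrightarrow> grad \<psi> p \<noteq> 0" "\<delta> > 0"
  obtains m where "m > 0"
    "\<And>p. \<delta> \<le> norm (p - z) \<Longrightarrow> norm (p - z) \<le> R \<Longrightarrow> m \<le> norm (grad \<psi> p)"
proof -
  define A where "A = cball z R \<inter> {p. \<delta> \<le> norm (p - z)}"
  have compact: "compact A"
    unfolding A_def by (intro compact_Int_closed compact_cball closed_Collect_le continuous_intros)
  have continuous: "continuous_on A (grad \<psi>)"
    by (intro continuous_at_imp_continuous_on ballI
        has_derivative_continuous[OF smooth2_has_hess[OF assms(1)]])
  have nonzero: "grad \<psi> p \<noteq> 0" if "p \<in> A" for p
    using that assms(2,3) unfolding A_def by force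
  obtain m where "m > 0" "\<And>p. p \<in> A \<Longrightarrow> m \<le> norm (grad \<psi> p)"
    using continuous_on_compact_norm_lower_bound[OF compact continuous nonzero] by blast
  then show ?thesis
    using that[of m] unfolding A_def by (simp add: dist_norm norm_minus_commute)
qed

section \<open>The odd part of the Hessian\<close>

lemma smooth2_hess_form_odd_part_near_center:
  assumes "smooth2 \<psi>" "r > 0" and sym: "\<And>q. q \<in> ball z r \<Longrightarrow> \<psi> q = \<psi> (2 *\<^sub>R z - q)"
  obtains C where "C \<ge> 0"
    "\<And>p y u. norm u = 1 \<Longrightarrow> norm (p - z) \<le> r / 4 \<Longrightarrow> norm y \<le> r / 4 \<Longrightarrow>
      \<bar>(hess \<psi> (p + y) *v u) \<bullet> u - (hess \<psi> (p - y) *v u) \<bullet> u\<bar> \<le> C * norm (p - z)"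
proof -
  obtain L where "L \<ge> 0" and L: "\<And>x y. x \<in> cball z (r / 2) \<Longrightarrow> y \<in> cball z (r / 2) \<Longrightarrow>
      onorm (\<lambda>v. (hess \<psi> x - hess \<psi> y) *v v) \<le> L * norm (x - y)"
    using smooth2_hess_lipschitz[OF assms(1) compact_cball convex_cball] by blast
  have "\<bar>(hess \<psi> (p + y) *v u) \<bullet> u - (hess \<psi> (p - y) *v u) \<bullet> u\<bar> \<le> 2 * L * norm (p - z)"
    if u: "norm u = 1" and p: "norm (p - z) \<le> r / 4" and y: "norm y \<le> r / 4" for p y u
  proof -
    let ?p' = "2 *\<^sub>R z - (p - y)"
    have "norm (p - y - z) \<le> r / 2" "norm (p + y - z) \<le> r / 2"
      using norm_triangle_ineq4[of "p - z" y] norm_triangle_ineq[of "p - z" y] p y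
      by (simp_all add: algebra_simps)
    then have in_balls: "p - y \<in> ball z r" "p + y \<in> cball z (r / 2)" "?p' \<in> cball z (r / 2)"
      using p y \<open>r > 0\<close> by (auto simp: dist_norm norm_minus_commute algebra_simps scaleR_2)
    \<comment> \<open>Evenness about z moves p - y to a point at distance 2 |p - z| from p + y.\<close>
    have reflect: "hess \<psi> (p - y) = hess \<psi> ?p'"
      by (rule smooth2_hess_reflect[of \<psi> z r, OF assms(1) sym in_balls(1)])
    have "(hess \<psi> (p + y) *v u) \<bullet> u - (hess \<psi> (p - y) *v u) \<bullet> u
        = ((hess \<psi> (p + y) - hess \<psi> ?p') *v u) \<bullet> u"
      unfolding reflect by (simp add: matrix_vector_mult_diff_rdistrib inner_diff_left)
    also have "\<bar>\<dots>\<bar> \<le> L * norm (p + y - ?p')"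
      using abs_quadratic_form_le_onorm[OF u] L[OF in_balls(2,3)] by (rule order_trans)
    also have "p + y - ?p' = 2 *\<^sub>R (p - z)"
      by (simp add: algebra_simps scaleR_2)
    finally show ?thesis
      by simp
  qed
  then show ?thesis
    using that[of "2 * L"] \<open>L \<ge> 0\<close> by simp
qed

lemma smooth2_hess_form_odd_part_le_grad_near_center:
  assumes smooth: "smooth2 \<psi>" and nondegenerate: "\<And>v. hess \<psi> z *v v = 0 \<Longrightarrow> v = 0"
    and "r > 0" and sym: "\<And>q. q \<in> ball z r \<Longrightarrow> \<psi> q = \<psi> (2 *\<^sub>R z - q)"
  obtains \<delta> K where "\<delta> > 0" "K \<ge> 0"
    "\<And>p y u. norm u = 1 \<Longrightarrow> norm (p - z) < \<delta> \<Longrightarrow> norm y \<le> r / 4 \<Longrightarrow>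
      \<bar>(hess \<psi> (p + y) *v u) \<bullet> u - (hess \<psi> (p - y) *v u) \<bullet> u\<bar> \<le> K * norm (grad \<psi> p)"
proof -
  have "grad \<psi> z = - grad \<psi> z"
    using smooth2_grad_reflect[of \<psi> z r z, OF smooth sym] \<open>r > 0\<close> by (simp add: scaleR_2)
  then have "grad \<psi> z = 0"
    by (simp add: vec_eq_iff)
  then obtain l \<delta> where "l > 0" "\<delta> > 0"
    and near: "\<And>p. norm (p - z) < \<delta> \<Longrightarrow> l * norm (p - z) \<le> norm (grad \<psi> p)"
    using grad_lower_bound_near_critical_point[OF smooth _ nondegenerate] by blast
  obtain C where "C \<ge> 0" and center: "\<And>p y u. norm u = 1 \<Longrightarrow> norm (p - z) \<le> r / 4 \<Longrightarrow>
      norm y \<le> r / 4 \<Longrightarrow> \<bar>(hess \<psi> (p + y) *v u) \<bullet> u - (hess \<psi> (p - y) *v u) \<bullet> u\<bar> \<le> C * norm (p - z)"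
    using smooth2_hess_form_odd_part_near_center[of \<psi> r z, OF smooth \<open>r > 0\<close> sym] by blast
  have "\<bar>(hess \<psi> (p + y) *v u) \<bullet> u - (hess \<psi> (p - y) *v u) \<bullet> u\<bar> \<le> C / l * norm (grad \<psi> p)"
    if "norm u = 1" "norm (p - z) < min \<delta> (r / 4)" "norm y \<le> r / 4" for p y u
  proof -
    have "\<bar>(hess \<psi> (p + y) *v u) \<bullet> u - (hess \<psi> (p - y) *v u) \<bullet> u\<bar> \<le> C / l * (l * norm (p - z))"
      using center[of u p y] that \<open>l > 0\<close> by simp
    also have "\<dots> \<le> C / l * norm (grad \<psi> p)"
      using near[of p] that \<open>C \<ge> 0\<close> \<open>l > 0\<close> by (intro mult_left_mono) auto
    finally show ?thesis .
  qed
  moreover have "min \<delta> (r / 4) > 0" "C / l \<ge> 0"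
    using \<open>\<delta> > 0\<close> \<open>r > 0\<close> \<open>C \<ge> 0\<close> \<open>l > 0\<close> by simp_all
  ultimately show ?thesis
    using that by blast
qed

lemma abs_hess_form_diff_le_hess_norm:
  assumes "norm u = 1"
  shows "\<bar>(hess \<psi> x *v u) \<bullet> u - (hess \<psi> y *v u) \<bullet> u\<bar> \<le> hess_norm \<psi> x + hess_norm \<psi> y"
  using abs_quadratic_form_le_onorm[OF assms, of "hess \<psi> x"]
    abs_quadratic_form_le_onorm[OF assms, of "hess \<psi> y"]
  unfolding hess_norm_def by simp

lemma smooth2_hess_form_odd_part_le_grad_away_from_center:
  assumes smooth: "smooth2 \<psi>" and bounded: "\<And>p. hess_norm \<psi> p \<le> c1"
    and noncritical: "\<And>p. p \<noteq> z \<Longrightarrow> grad \<psi> p \<noteq> 0" and "\<delta> > 0"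
    and far: "\<And>p v. r2 \<le> norm (p - z) \<Longrightarrow> norm v \<le> r3 \<Longrightarrow> hess_norm \<psi> (p + v) \<le> c2 * norm (grad \<psi> p)"
  obtains K where "K \<ge> 0"
    "\<And>p y u. norm u = 1 \<Longrightarrow> \<delta> \<le> norm (p - z) \<Longrightarrow> norm y \<le> r3 \<Longrightarrow>
      \<bar>(hess \<psi> (p + y) *v u) \<bullet> u - (hess \<psi> (p - y) *v u) \<bullet> u\<bar> \<le> K * norm (grad \<psi> p)"
proof -
  obtain m where "m > 0"
    and annulus: "\<And>p. \<delta> \<le> norm (p - z) \<Longrightarrow> norm (p - z) \<le> r2 \<Longrightarrow> m \<le> norm (grad \<psi> p)"
    using smooth2_grad_bounded_below_on_annulus[OF smooth noncritical \<open>\<delta> > 0\<close>] by blast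
  define K where "K = 2 * \<bar>c1\<bar> / m + 2 * \<bar>c2\<bar>"
  have "0 \<le> 2 * \<bar>c1\<bar> / m" "0 \<le> 2 * \<bar>c2\<bar>"
    using \<open>m > 0\<close> by simp_all
  then have K_ge: "2 * \<bar>c1\<bar> / m \<le> K" "2 * \<bar>c2\<bar> \<le> K" "K \<ge> 0"
    unfolding K_def by linarith+
  have "\<bar>(hess \<psi> (p + y) *v u) \<bullet> u - (hess \<psi> (p - y) *v u) \<bullet> u\<bar> \<le> K * norm (grad \<psi> p)"
    if u: "norm u = 1" and p: "\<delta> \<le> norm (p - z)" and y: "norm y \<le> r3" for p y u
  proof (cases "r2 \<le> norm (p - z)")
    case True
    have "c2 * norm (grad \<psi> p) \<le> \<bar>c2\<bar> * norm (grad \<psi> p)"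
      by (simp add: mult_right_mono)
    then have "\<bar>(hess \<psi> (p + y) *v u) \<bullet> u - (hess \<psi> (p - y) *v u) \<bullet> u\<bar> \<le> 2 * \<bar>c2\<bar> * norm (grad \<psi> p)"
      using abs_hess_form_diff_le_hess_norm[OF u, of \<psi> "p + y" "p - y"]
        far[OF True, of y] far[OF True, of "- y"] y by simp
    also have "\<dots> \<le> K * norm (grad \<psi> p)"
      using K_ge(2) by (simp add: mult_right_mono)
    finally show ?thesis .
  next
    case False
    have "\<bar>(hess \<psi> (p + y) *v u) \<bullet> u - (hess \<psi> (p - y) *v u) \<bullet> u\<bar> \<le> 2 * \<bar>c1\<bar> / m * m"
      using abs_hess_form_diff_le_hess_norm[OF u, of \<psi> "p + y" "p - y"]
        bounded[of "p + y"] bounded[of "p - y"] \<open>m > 0\<close> by simp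
    also have "\<dots> \<le> K * norm (grad \<psi> p)"
      using annulus[OF p] False K_ge(1,3) \<open>m > 0\<close> by (intro mult_mono) auto
    finally show ?thesis .
  qed
  with K_ge(3) show ?thesis
    using that by blast
qed

lemma smooth2_hess_form_odd_part_le_grad:
  assumes smooth: "smooth2 \<psi>"
    and nondegenerate: "\<And>v. hess \<psi> z *v v = 0 \<Longrightarrow> v = 0"
    and "r1 > 0" and sym: "\<And>v. norm v \<le> r1 \<Longrightarrow> \<psi> (z + v) = \<psi> (z - v)"
    and bounded: "\<And>p. hess_norm \<psi> p \<le> c1"
    and noncritical: "\<And>p. p \<noteq> z \<Longrightarrow> grad \<psi> p \<noteq> 0"
    and "r3 > 0"
    and far: "\<And>p v. r2 \<le> norm (p - z) \<Longrightarrow> norm v \<le> r3 \<Longrightarrow> hess_norm \<psi> (p + v) \<le> c2 * norm (grad \<psi> p)"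
  obtains \<rho> K where "\<rho> > 0" "K > 0"
    "\<And>p y u. norm u = 1 \<Longrightarrow> norm y \<le> \<rho> \<Longrightarrow>
      \<bar>(hess \<psi> (p + y) *v u) \<bullet> u - (hess \<psi> (p - y) *v u) \<bullet> u\<bar> \<le> K * norm (grad \<psi> p)"
proof -
  have "\<psi> q = \<psi> (2 *\<^sub>R z - q)" if "q \<in> ball z r1" for q
    using sym[of "q - z"] that by (simp add: dist_norm norm_minus_commute algebra_simps scaleR_2)
  then obtain \<delta> K\<^sub>0 where "\<delta> > 0" "K\<^sub>0 \<ge> 0" and near: "\<And>p y u. norm u = 1 \<Longrightarrow> norm (p - z) < \<delta> \<Longrightarrow>
      norm y \<le> r1 / 4 \<Longrightarrow>
      \<bar>(hess \<psi> (p + y) *v u) \<bullet> u - (hess \<psi> (p - y) *v u) \<bullet> u\<bar> \<le> K\<^sub>0 * norm (grad \<psi> p)"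
    using smooth2_hess_form_odd_part_le_grad_near_center[OF smooth nondegenerate \<open>r1 > 0\<close>] by blast
  obtain K\<^sub>1 where "K\<^sub>1 \<ge> 0" and away: "\<And>p y u. norm u = 1 \<Longrightarrow> \<delta> \<le> norm (p - z) \<Longrightarrow>
      norm y \<le> r3 \<Longrightarrow>
      \<bar>(hess \<psi> (p + y) *v u) \<bullet> u - (hess \<psi> (p - y) *v u) \<bullet> u\<bar> \<le> K\<^sub>1 * norm (grad \<psi> p)"
    using smooth2_hess_form_odd_part_le_grad_away_from_center[OF smooth bounded noncritical
        \<open>\<delta> > 0\<close> far] by blast
  have "\<bar>(hess \<psi> (p + y) *v u) \<bullet> u - (hess \<psi> (p - y) *v u) \<bullet> u\<bar> \<le> (K\<^sub>0 + K\<^sub>1 + 1) * norm (grad \<psi> p)"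
    if "norm u = 1" "norm y \<le> min (r1 / 4) r3" for p y u
  proof -
    have "\<bar>(hess \<psi> (p + y) *v u) \<bullet> u - (hess \<psi> (p - y) *v u) \<bullet> u\<bar> \<le> K\<^sub>0 * norm (grad \<psi> p) \<or>
        \<bar>(hess \<psi> (p + y) *v u) \<bullet> u - (hess \<psi> (p - y) *v u) \<bullet> u\<bar> \<le> K\<^sub>1 * norm (grad \<psi> p)"
      using near[of u p y] away[of u p y] that by force
    moreover have "K\<^sub>0 * norm (grad \<psi> p) \<le> (K\<^sub>0 + K\<^sub>1 + 1) * norm (grad \<psi> p)"
      "K\<^sub>1 * norm (grad \<psi> p) \<le> (K\<^sub>0 + K\<^sub>1 + 1) * norm (grad \<psi> p)"
      using \<open>K\<^sub>0 \<ge> 0\<close> \<open>K\<^sub>1 \<ge> 0\<close> by (simp_all add: mult_right_mono)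
    ultimately show ?thesis
      by linarith
  qed
  moreover have "min (r1 / 4) r3 > 0" "K\<^sub>0 + K\<^sub>1 + 1 > 0"
    using \<open>r1 > 0\<close> \<open>r3 > 0\<close> \<open>K\<^sub>0 \<ge> 0\<close> \<open>K\<^sub>1 \<ge> 0\<close> by simp_all
  ultimately show ?thesis
    using that by blast
qed

section \<open>Averaging over a period\<close>

lemma has_integral_reflect_ivl:
  fixes f :: "real \<Rightarrow> 'a::banach"
  assumes "(f has_integral I) {0..T}"
  shows "((\<lambda>t. f (T - t)) has_integral I) {0..T}"
proof -
  have "((\<lambda>x. f (- x)) has_integral I) {- T..- 0}"
    using assms by (simp only: has_integral_reflect_real)
  then have "(((\<lambda>x. f (- x)) \<circ> (+) (- T)) has_integral I) {0..T}"
    by (simp add: has_integral_shift_Icc_real)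
  then show ?thesis
    by (simp add: o_def)
qed

lemma integral_sin_odd_part_bound:
  fixes k :: "real \<Rightarrow> real"
  assumes odd: "\<And>x. \<bar>x\<bar> \<le> 1 \<Longrightarrow> \<bar>k x + k (- x)\<bar> \<le> B"
  shows "\<bar>integral {0..2*pi} (\<lambda>\<tau>. k (sin (real w * \<tau>)))\<bar> \<le> pi * B"
proof -
  have "B \<ge> 0"
    using odd[of 0] by simp
  show ?thesis
  proof (cases "(\<lambda>\<tau>. k (sin (real w * \<tau>))) integrable_on {0..2*pi}")
    case True
    let ?I = "integral {0..2*pi} (\<lambda>\<tau>. k (sin (real w * \<tau>)))"
    have flip: "sin (real w * (2 * pi - \<tau>)) = - sin (real w * \<tau>)" for \<tau>
    proof -
      have "real w * (2 * pi - \<tau>) = real (2 * w) * pi - real w * \<tau>"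
        by (simp add: algebra_simps)
      then show ?thesis
        by (simp add: sin_diff)
    qed
    have I: "((\<lambda>\<tau>. k (sin (real w * \<tau>))) has_integral ?I) {0..2*pi}"
      using True by (rule integrable_integral)
    then have "((\<lambda>\<tau>. k (- sin (real w * \<tau>))) has_integral ?I) {0..2*pi}"
      using has_integral_reflect_ivl[OF I] by (simp add: flip)
    then have sum: "((\<lambda>\<tau>. k (sin (real w * \<tau>)) + k (- sin (real w * \<tau>))) has_integral ?I + ?I)
        {0..2*pi}"
      by (rule has_integral_add[OF I])
    have "norm (k (sin (real w * \<tau>)) + k (- sin (real w * \<tau>))) \<le> B" for \<tau>
      using odd abs_sin_le_one by simp
    with has_integral_bound_real[OF \<open>B \<ge> 0\<close> finite.emptyI sum]
    have "norm (?I + ?I) \<le> B * (2 * pi)"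
      by simp
    then show ?thesis
      by (simp add: abs_mult mult_ac)
  next
    case False
    then show ?thesis
      using \<open>B \<ge> 0\<close> by (simp add: not_integrable_integral)
  qed
qed

lemma phi_abs_le:
  fixes \<psi> :: "real^2 \<Rightarrow> real" and u :: "real^2"
  assumes continuous: "continuous_on UNIV (\<lambda>q. (hess \<psi> q *v u) \<bullet> u)" and "norm u = 1"
    and odd: "\<And>y. norm y \<le> \<bar>a * \<alpha>\<bar> \<Longrightarrow>
      \<bar>(hess \<psi> (p + y) *v u) \<bullet> u - (hess \<psi> (p - y) *v u) \<bullet> u\<bar> \<le> B"
  shows "\<bar>phi \<psi> \<alpha> c w a p u\<bar> \<le> \<alpha>\<^sup>2 * \<bar>c\<bar> * B / 2"
proof -
  define Q where "Q q = (hess \<psi> q *v u) \<bullet> u" for q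
  define g where "g x s = (1 - s) * (\<alpha> * x)\<^sup>2 * (c * x) * Q (p + (a * s * (\<alpha> * x)) *\<^sub>R u)" for x s
  define k where "k x = integral {0..1} (g x)" for x
  have phi: "phi \<psi> \<alpha> c w a p u = 1 / (2 * pi) * integral {0..2*pi} (\<lambda>\<tau>. k (sin (real w * \<tau>)))"
    unfolding phi_def k_def g_def[abs_def] Q_def ..
  have "B \<ge> 0"
    using odd[of 0] by simp
  have "\<bar>k x + k (- x)\<bar> \<le> \<alpha>\<^sup>2 * \<bar>c\<bar> * B" if x: "\<bar>x\<bar> \<le> 1" for x
  proof -
    have g_continuous: "continuous_on {0..1} (g x)" for x
      unfolding g_def Q_def by (intro continuous_intros continuous_on_compose2[OF continuous]) auto
    have "\<bar>g x s + g (- x) s\<bar> \<le> \<alpha>\<^sup>2 * \<bar>c\<bar> * B" if s: "s \<in> {0..1}" for s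
    proof -
      define y where "y = (a * s * (\<alpha> * x)) *\<^sub>R u"
      have "norm y = \<bar>a * \<alpha>\<bar> * (s * \<bar>x\<bar>)"
        using s \<open>norm u = 1\<close> by (simp add: y_def abs_mult)
      also have "\<dots> \<le> \<bar>a * \<alpha>\<bar> * 1"
        using s x by (intro mult_left_mono) (auto simp: mult_le_one)
      finally have Q_bound: "\<bar>Q (p + y) - Q (p - y)\<bar> \<le> B"
        using odd unfolding Q_def by simp
      have "p + (a * s * (\<alpha> * x)) *\<^sub>R u = p + y" "p + (a * s * (\<alpha> * - x)) *\<^sub>R u = p - y"
        by (simp_all add: y_def)
      then have "g x s + g (- x) s = (1 - s) * x ^ 3 * (\<alpha>\<^sup>2 * c) * (Q (p + y) - Q (p - y))"
        unfolding g_def by (simp add: power2_eq_square power3_eq_cube algebra_simps)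
      then have "\<bar>g x s + g (- x) s\<bar> = (\<bar>1 - s\<bar> * \<bar>x\<bar> ^ 3) * (\<alpha>\<^sup>2 * \<bar>c\<bar>) * \<bar>Q (p + y) - Q (p - y)\<bar>"
        by (simp add: abs_mult power_abs)
      also have "\<dots> \<le> 1 * (\<alpha>\<^sup>2 * \<bar>c\<bar>) * B"
        using Q_bound s x by (intro mult_mono order_refl mult_le_one power_le_one) auto
      finally show ?thesis
        by simp
    qed
    then have "norm (integral {0..1} (\<lambda>s. g x s + g (- x) s)) \<le> \<alpha>\<^sup>2 * \<bar>c\<bar> * B * (1 - 0)"
      by (intro integral_bound continuous_on_add g_continuous) auto
    moreover have "integral {0..1} (\<lambda>s. g x s + g (- x) s) = k x + k (- x)"
      unfolding k_def by (intro integral_add integrable_continuous_real g_continuous)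
    ultimately show ?thesis
      by simp
  qed
  then have "\<bar>integral {0..2*pi} (\<lambda>\<tau>. k (sin (real w * \<tau>)))\<bar> \<le> pi * (\<alpha>\<^sup>2 * \<bar>c\<bar> * B)"
    by (rule integral_sin_odd_part_bound)
  then show ?thesis
    by (simp add: phi abs_mult pos_divide_le_eq mult_ac)
qed

theorem lemma3:
  fixes \<psi> :: "real^2 \<Rightarrow> real" and pstar :: "real^2"
    and \<alpha> c :: real and w :: nat
  assumes smooth: "smooth2 \<psi>"
    and C1: "\<And>p. p \<noteq> pstar \<Longrightarrow> \<psi> p < \<psi> pstar"
    and C2: "\<And>v. v \<noteq> 0 \<Longrightarrow> (hess \<psi> pstar *v v) \<bullet> v < 0"
    and C3: "\<exists>r1>0. \<forall>v. norm v \<le> r1 \<longrightarrow> \<psi> (pstar + v) = \<psi> (pstar - v)"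
    and C4: "\<exists>c1>0. \<forall>p. hess_norm \<psi> p \<le> c1"
    and C5: "\<And>p. p \<noteq> pstar \<Longrightarrow> grad \<psi> p \<noteq> 0"
    and C6: "\<And>y. (\<exists>p. \<psi> p < y) \<Longrightarrow> y < \<psi> pstar \<Longrightarrow> compact {p. y \<le> \<psi> p}"
    and C7: "\<exists>c2>0. \<exists>r2>0. \<exists>r3>0. \<forall>p v. norm (p - pstar) \<ge> r2 \<and> norm v \<le> r3 \<longrightarrow>
               hess_norm \<psi> (p + v) \<le> c2 * norm (grad \<psi> p)"
    and \<alpha>pos: "\<alpha> > 0" and cpos: "c > 0"
  shows "\<exists>a0>0. \<exists>\<kappa>>0. \<forall>a\<in>{0..a0}. \<forall>p. \<forall>u\<in>sphere 0 1.
           \<bar>phi \<psi> \<alpha> c w a p u\<bar> \<le> \<kappa> * norm (grad \<psi> p)"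
proof -
  obtain r1 where "r1 > 0" and sym: "\<And>v. norm v \<le> r1 \<Longrightarrow> \<psi> (pstar + v) = \<psi> (pstar - v)"
    using C3 by blast
  obtain c1 where bounded: "\<And>p. hess_norm \<psi> p \<le> c1"
    using C4 by blast
  obtain c2 r2 r3 where "r3 > 0" and far: "\<And>p v. r2 \<le> norm (p - pstar) \<Longrightarrow> norm v \<le> r3 \<Longrightarrow>
      hess_norm \<psi> (p + v) \<le> c2 * norm (grad \<psi> p)"
    using C7 by blast
  have "v = 0" if "hess \<psi> pstar *v v = 0" for v
    using C2[of v] that by force
  then obtain \<rho> K where "\<rho> > 0" "K > 0" and odd: "\<And>p y u. norm u = 1 \<Longrightarrow> norm y \<le> \<rho> \<Longrightarrow>
      \<bar>(hess \<psi> (p + y) *v u) \<bullet> u - (hess \<psi> (p - y) *v u) \<bullet> u\<bar> \<le> K * norm (grad \<psi> p)"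
    using smooth2_hess_form_odd_part_le_grad[OF smooth _ \<open>r1 > 0\<close> sym bounded C5 \<open>r3 > 0\<close> far]
    by blast
  show ?thesis
  proof (intro exI conjI ballI allI)
    show "\<rho> / \<alpha> > 0" "\<alpha>\<^sup>2 * c * K / 2 > 0"
      using \<open>\<rho> > 0\<close> \<open>K > 0\<close> \<alpha>pos cpos by simp_all
    fix a :: real and p u :: "real^2"
    assume "a \<in> {0..\<rho> / \<alpha>}" "u \<in> sphere 0 1"
    then have "\<bar>a * \<alpha>\<bar> \<le> \<rho>" "norm u = 1"
      using \<alpha>pos by (auto simp: abs_mult field_simps)
    with odd have "\<bar>phi \<psi> \<alpha> c w a p u\<bar> \<le> \<alpha>\<^sup>2 * \<bar>c\<bar> * (K * norm (grad \<psi> p)) / 2"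
      by (intro phi_abs_le continuous_on_quadratic_form smooth2_continuous_hess smooth) auto
    then show "\<bar>phi \<psi> \<alpha> c w a p u\<bar> \<le> \<alpha>\<^sup>2 * c * K / 2 * norm (grad \<psi> p)"
      using cpos by (simp add: mult_ac)
  qed
qed

end
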